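(* Let $\mathcal{O}$ be a nonsymmetric operad, $\pi\in\mathcal{O}(2)$ a multiplication on $\mathcal{O}$, and $R\in\mathcal{O}(1)$ a Rota-Baxter element with respect to $\pi$, i.e. $(\pi\circ_2 R)\circ_1 R=R\circ_1(\pi\circ_1 R+\pi\circ_2 R)$. Put $\pi_\prec=\pi\circ_2 R$ and $\pi_\succ=\pi\circ_1 R$. Then $(\pi_\prec,\pi_\succ)$ is a dendriform-multiplication on $\mathcal{O}$.
   Context: A nonsymmetric operad $\mathcal{O}$ (over a commutative unital ring $\mathbf{k}$ of characteristic $0$) consists of $\mathbf{k}$-modules $\mathcal{O}(n)$, $n\ge1$, bilinear partial compositions $\circ_i:\mathcal{O}(m)\otimes\mathcal{O}(n)\to\mathcal{O}(m+n-1)$ and a unit $\mathds{1}\in\mathcal{O}(1)$ satisfying $(f\circ_i g)\circ_{i+j-1}h=f\circ_i(g\circ_j h)$, $(f\circ_i g)\circ_{j+n-1}h=(f\circ_j h)\circ_i g$ for $i<j$, and $f\circ_i\mathds{1}=\mathds{1}\circ_1 f=f$. A multiplication is $\pi\in\mathcal{O}(2)$ with $\pi\circ_1\pi=\pi\circ_2\pi$. A dendriform-multiplication on $\mathcal{O}$ is a pair $(\pi_\prec,\pi_\succ)$ of elements of $\mathcal{O}(2)$ with $\pi_\prec\circ_1\pi_\prec=\pi_\prec\circ_2(\pi_\prec+\pi_\succ)$, $\pi_\prec\circ_1\pi_\succ=\pi_\succ\circ_2\pi_\prec$, and $\pi_\succ\circ_1(\pi_\prec+\pi_\succ)=\pi_\succ\circ_2\pi_\succ$.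 *)

theory Defs
  imports Main "HOL.Modules"
begin

text \<open>The components Op(n), n \<ge> 1, are
submodules Op n of an ambient 'k-module 'o (scalar multiplication smul);
the partial composition o_i : Op(m) x Op(n) -> Op(m+n-1) is pcomp m n i,
required to be bilinear on the carriers; unit is the operadic unit.\<close>

definition ns_operad ::
  "('k::comm_ring_1 \<Rightarrow> 'o::ab_group_add \<Rightarrow> 'o) \<Rightarrow> (nat \<Rightarrow> 'o set)
   \<Rightarrow> (nat \<Rightarrow> nat \<Rightarrow> nat \<Rightarrow> 'o \<Rightarrow> 'o \<Rightarrow> 'o) \<Rightarrow> 'o \<Rightarrow> bool" where
  "ns_operad smul Op pcomp unit \<longleftrightarrow>
     module smul \<and>
     (\<forall>n\<ge>1. 0 \<in> Op n \<and> (\<forall>x\<in>Op n. \<forall>y\<in>Op n. x + y \<in> Op n) \<and> (\<forall>c. \<forall>x\<in>Op n. smul c x \<in> Op n)) \<and>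
     (\<forall>m n i f g. 1 \<le> m \<and> 1 \<le> n \<and> 1 \<le> i \<and> i \<le> m \<and> f \<in> Op m \<and> g \<in> Op n
        \<longrightarrow> pcomp m n i f g \<in> Op (m + n - 1)) \<and>
     (\<forall>m n i f f' g. 1 \<le> m \<and> 1 \<le> n \<and> 1 \<le> i \<and> i \<le> m \<and> f \<in> Op m \<and> f' \<in> Op m \<and> g \<in> Op n
        \<longrightarrow> pcomp m n i (f + f') g = pcomp m n i f g + pcomp m n i f' g) \<and>
     (\<forall>m n i f g g'. 1 \<le> m \<and> 1 \<le> n \<and> 1 \<le> i \<and> i \<le> m \<and> f \<in> Op m \<and> g \<in> Op n \<and> g' \<in> Op n
        \<longrightarrow> pcomp m n i f (g + g') = pcomp m n i f g + pcomp m n i f g') \<and>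
     (\<forall>m n i c f g. 1 \<le> m \<and> 1 \<le> n \<and> 1 \<le> i \<and> i \<le> m \<and> f \<in> Op m \<and> g \<in> Op n
        \<longrightarrow> pcomp m n i (smul c f) g = smul c (pcomp m n i f g)
          \<and> pcomp m n i f (smul c g) = smul c (pcomp m n i f g)) \<and>
     (\<forall>m n p i j f g h. 1 \<le> m \<and> 1 \<le> n \<and> 1 \<le> p \<and> 1 \<le> i \<and> i \<le> m \<and> 1 \<le> j \<and> j \<le> n
        \<and> f \<in> Op m \<and> g \<in> Op n \<and> h \<in> Op p
        \<longrightarrow> pcomp (m + n - 1) p (i + j - 1) (pcomp m n i f g) h
            = pcomp m (n + p - 1) i f (pcomp n p j g h)) \<and>
     (\<forall>m n p i j f g h. 1 \<le> m \<and> 1 \<le> n \<and> 1 \<le> p \<and> 1 \<le> i \<and> i < j \<and> j \<le> m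
        \<and> f \<in> Op m \<and> g \<in> Op n \<and> h \<in> Op p
        \<longrightarrow> pcomp (m + n - 1) p (j + n - 1) (pcomp m n i f g) h
            = pcomp (m + p - 1) n i (pcomp m p j f h) g) \<and>
     unit \<in> Op 1 \<and>
     (\<forall>m i f. 1 \<le> m \<and> 1 \<le> i \<and> i \<le> m \<and> f \<in> Op m
        \<longrightarrow> pcomp m 1 i f unit = f) \<and>
     (\<forall>m f. 1 \<le> m \<and> f \<in> Op m \<longrightarrow> pcomp 1 m 1 unit f = f)"

definition is_multiplication ::
  "(nat \<Rightarrow> 'o set) \<Rightarrow> (nat \<Rightarrow> nat \<Rightarrow> nat \<Rightarrow> 'o \<Rightarrow> 'o \<Rightarrow> 'o) \<Rightarrow> 'o \<Rightarrow> bool" where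
  "is_multiplication Op pcomp \<pi> \<longleftrightarrow> \<pi> \<in> Op 2 \<and> pcomp 2 2 1 \<pi> \<pi> = pcomp 2 2 2 \<pi> \<pi>"

definition is_rota_baxter ::
  "(nat \<Rightarrow> 'o::plus set) \<Rightarrow> (nat \<Rightarrow> nat \<Rightarrow> nat \<Rightarrow> 'o \<Rightarrow> 'o \<Rightarrow> 'o) \<Rightarrow> 'o \<Rightarrow> 'o \<Rightarrow> bool" where
  "is_rota_baxter Op pcomp \<pi> R \<longleftrightarrow> R \<in> Op 1 \<and>
     pcomp 2 1 1 (pcomp 2 1 2 \<pi> R) R = pcomp 1 2 1 R (pcomp 2 1 1 \<pi> R + pcomp 2 1 2 \<pi> R)"

definition is_dendriform_multiplication ::
  "(nat \<Rightarrow> 'o::plus set) \<Rightarrow> (nat \<Rightarrow> nat \<Rightarrow> nat \<Rightarrow> 'o \<Rightarrow> 'o \<Rightarrow> 'o) \<Rightarrow> 'o \<Rightarrow> 'o \<Rightarrow> bool" where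
  "is_dendriform_multiplication Op pcomp pl pr \<longleftrightarrow> pl \<in> Op 2 \<and> pr \<in> Op 2 \<and>
     pcomp 2 2 1 pl pl = pcomp 2 2 2 pl (pl + pr) \<and>
     pcomp 2 2 1 pl pr = pcomp 2 2 2 pr pl \<and>
     pcomp 2 2 1 pr (pl + pr) = pcomp 2 2 2 pr pr"

end

theory Submission
  imports Defs
begin

text \<open>Composing into the input of
\<open>\<pi>\<^sub>\<prec>\<close> or \<open>\<pi>\<^sub>\<succ>\<close> that does not carry \<open>R\<close> merely postpones the insertion of \<open>R\<close>
(parallel axiom), while composing into the input carrying \<open>R\<close> puts \<open>R\<close> on top of the inserted
operation (sequential axiom). After the Rota-Baxter identity has traded
\<open>R \<circ>\<^sub>1 (\<pi>\<^sub>\<prec> + \<pi>\<^sub>\<succ>)\<close> for \<open>\<pi>\<^sub>\<prec> \<circ>\<^sub>1 R\<close>, each dendriform identity thus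
becomes an equation between copies of \<open>\<pi> \<circ>\<^sub>1 \<pi> = \<pi> \<circ>\<^sub>2 \<pi>\<close> with \<open>R\<close> plugged into two
of its inputs, and these agree because unary insertions into distinct inputs commute.\<close>

text \<open>Neither the unit nor the linearity of the compositions enters the argument; only the
associativity axioms and closure of the components under \<open>+\<close> are assumed.\<close>

locale pseudo_operad =
  fixes Op :: "nat \<Rightarrow> 'o::ab_semigroup_add set"
    and pcomp :: "nat \<Rightarrow> nat \<Rightarrow> nat \<Rightarrow> 'o \<Rightarrow> 'o \<Rightarrow> 'o"
  assumes pcomp_closed: "\<lbrakk>1 \<le> m; 1 \<le> n; 1 \<le> i; i \<le> m; f \<in> Op m; g \<in> Op n\<rbrakk>
      \<Longrightarrow> pcomp m n i f g \<in> Op (m + n - 1)"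
    and plus_closed: "\<lbrakk>1 \<le> n; x \<in> Op n; y \<in> Op n\<rbrakk> \<Longrightarrow> x + y \<in> Op n"
    and pcomp_sequential: "\<lbrakk>1 \<le> m; 1 \<le> n; 1 \<le> p; 1 \<le> i; i \<le> m; 1 \<le> j; j \<le> n;
        f \<in> Op m; g \<in> Op n; h \<in> Op p\<rbrakk>
      \<Longrightarrow> pcomp (m + n - 1) p (i + j - 1) (pcomp m n i f g) h
          = pcomp m (n + p - 1) i f (pcomp n p j g h)"
    and pcomp_parallel: "\<lbrakk>1 \<le> m; 1 \<le> n; 1 \<le> p; 1 \<le> i; i < j; j \<le> m;
        f \<in> Op m; g \<in> Op n; h \<in> Op p\<rbrakk>
      \<Longrightarrow> pcomp (m + n - 1) p (j + n - 1) (pcomp m n i f g) h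
          = pcomp (m + p - 1) n i (pcomp m p j f h) g"

lemma ns_operad_imp_pseudo_operad:
  assumes "ns_operad smul Op pcomp unit"
  shows "pseudo_operad Op pcomp"
  using assms unfolding ns_operad_def pseudo_operad_def
  by (elim conjE) (intro conjI allI impI; simp)

context pseudo_operad
begin

lemma pcomp_unary_commute:
  assumes "1 \<le> i" "i < j" "j \<le> m" "f \<in> Op m" "g \<in> Op 1" "h \<in> Op 1"
  shows "pcomp m 1 j (pcomp m 1 i f g) h = pcomp m 1 i (pcomp m 1 j f h) g"
  using pcomp_parallel[of m 1 1 i j f g h] assms by simp

lemma pcomp_sequential_2_2_1:
  assumes "i \<in> {1, 2}" "j \<in> {1, 2}" "f \<in> Op 2" "g \<in> Op 2" "h \<in> Op 1"
  shows "pcomp 2 2 i f (pcomp 2 1 j g h) = pcomp 3 1 (i + j - 1) (pcomp 2 2 i f g) h"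
  using pcomp_sequential[of 2 2 1 i j f g h] assms by (auto simp: numeral_eq_Suc)

lemma pcomp_sequential_2_1_2:
  assumes "i \<in> {1, 2}" "f \<in> Op 2" "g \<in> Op 1" "h \<in> Op 2"
  shows "pcomp 2 2 i (pcomp 2 1 i f g) h = pcomp 2 2 i f (pcomp 1 2 1 g h)"
  using pcomp_sequential[of 2 1 2 i 1 f g h] assms by (auto simp: numeral_eq_Suc)

end

locale rota_baxter_multiplication = pseudo_operad +
  fixes \<pi> R :: "'o::ab_semigroup_add"
  assumes multiplication: "is_multiplication Op pcomp \<pi>"
    and rota_baxter: "is_rota_baxter Op pcomp \<pi> R"
begin

abbreviation pi_prec :: 'o where "pi_prec \<equiv> pcomp 2 1 2 \<pi> R"
abbreviation pi_succ :: 'o where "pi_succ \<equiv> pcomp 2 1 1 \<pi> R"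

lemma pi_in: "\<pi> \<in> Op 2" and pi_assoc: "pcomp 2 2 1 \<pi> \<pi> = pcomp 2 2 2 \<pi> \<pi>"
  using multiplication unfolding is_multiplication_def by auto

lemma R_in: "R \<in> Op 1"
  and rota_baxter_eq: "pcomp 1 2 1 R (pi_prec + pi_succ) = pcomp 2 1 1 pi_prec R"
  using rota_baxter unfolding is_rota_baxter_def by (auto simp: add.commute)

lemma pi_prec_in: "pi_prec \<in> Op 2" and pi_succ_in: "pi_succ \<in> Op 2"
  using pcomp_closed[of 2 1 _ \<pi> R] pi_in R_in by (auto simp: numeral_eq_Suc)

lemma pi_pi_in: "i \<in> {1, 2} \<Longrightarrow> pcomp 2 2 i \<pi> \<pi> \<in> Op 3"
  using pcomp_closed[of 2 2 i \<pi> \<pi>] pi_in by (auto simp: numeral_eq_Suc)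

lemma pi_prec_comp_1:
  "X \<in> Op 2 \<Longrightarrow> pcomp 2 2 1 pi_prec X = pcomp 3 1 3 (pcomp 2 2 1 \<pi> X) R"
  using pcomp_parallel[of 2 2 1 1 2 \<pi> X R] pi_in R_in by (simp add: numeral_eq_Suc)

lemma pi_succ_comp_2:
  "X \<in> Op 2 \<Longrightarrow> pcomp 2 2 2 pi_succ X = pcomp 3 1 1 (pcomp 2 2 2 \<pi> X) R"
  using pcomp_parallel[of 2 1 2 1 2 \<pi> R X] pi_in R_in by (simp add: numeral_eq_Suc)

lemma dendriform_left: "pcomp 2 2 1 pi_prec pi_prec = pcomp 2 2 2 pi_prec (pi_prec + pi_succ)"
proof -
  have "pcomp 2 2 1 pi_prec pi_prec = pcomp 3 1 3 (pcomp 3 1 2 (pcomp 2 2 1 \<pi> \<pi>) R) R"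
    using pi_prec_comp_1[OF pi_prec_in] pcomp_sequential_2_2_1[of 1 2 \<pi> \<pi> R] pi_in R_in
    by (simp add: numeral_eq_Suc)
  also have "\<dots> = pcomp 3 1 2 (pcomp 3 1 3 (pcomp 2 2 2 \<pi> \<pi>) R) R"
    using pcomp_unary_commute[of 2 3 3] pi_pi_in R_in pi_assoc by simp
  also have "\<dots> = pcomp 2 2 2 \<pi> (pcomp 2 1 1 pi_prec R)"
    using pcomp_sequential_2_2_1[of 2 2 \<pi> \<pi> R] pcomp_sequential_2_2_1[of 2 1 \<pi> pi_prec R]
      pi_in pi_prec_in R_in
    by simp
  also have "\<dots> = pcomp 2 2 2 pi_prec (pi_prec + pi_succ)"
    using pcomp_sequential_2_1_2[of 2 \<pi> R "pi_prec + pi_succ"] rota_baxter_eq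
      plus_closed[OF _ pi_prec_in pi_succ_in] pi_in R_in
    by simp
  finally show ?thesis .
qed

lemma dendriform_middle: "pcomp 2 2 1 pi_prec pi_succ = pcomp 2 2 2 pi_succ pi_prec"
proof -
  have "pcomp 2 2 1 pi_prec pi_succ = pcomp 3 1 3 (pcomp 3 1 1 (pcomp 2 2 1 \<pi> \<pi>) R) R"
    using pi_prec_comp_1[OF pi_succ_in] pcomp_sequential_2_2_1[of 1 1 \<pi> \<pi> R] pi_in R_in
    by simp
  also have "\<dots> = pcomp 3 1 1 (pcomp 3 1 3 (pcomp 2 2 2 \<pi> \<pi>) R) R"
    using pcomp_unary_commute[of 1 3 3] pi_pi_in R_in pi_assoc by simp
  also have "\<dots> = pcomp 2 2 2 pi_succ pi_prec"
    using pi_succ_comp_2[OF pi_prec_in] pcomp_sequential_2_2_1[of 2 2 \<pi> \<pi> R] pi_in R_in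
    by simp
  finally show ?thesis .
qed

lemma dendriform_right: "pcomp 2 2 1 pi_succ (pi_prec + pi_succ) = pcomp 2 2 2 pi_succ pi_succ"
proof -
  have "pcomp 2 2 1 pi_succ (pi_prec + pi_succ) = pcomp 2 2 1 \<pi> (pcomp 2 1 1 pi_prec R)"
    using pcomp_sequential_2_1_2[of 1 \<pi> R "pi_prec + pi_succ"] rota_baxter_eq
      plus_closed[OF _ pi_prec_in pi_succ_in] pi_in R_in
    by simp
  also have "\<dots> = pcomp 3 1 1 (pcomp 3 1 2 (pcomp 2 2 2 \<pi> \<pi>) R) R"
    using pcomp_sequential_2_2_1[of 1 1 \<pi> pi_prec R] pcomp_sequential_2_2_1[of 1 2 \<pi> \<pi> R]
      pi_assoc pi_in pi_prec_in R_in
    by (simp add: numeral_eq_Suc)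
  also have "\<dots> = pcomp 2 2 2 pi_succ pi_succ"
    using pi_succ_comp_2[OF pi_succ_in] pcomp_sequential_2_2_1[of 2 1 \<pi> \<pi> R] pi_in R_in
    by simp
  finally show ?thesis .
qed

lemma dendriform_multiplication: "is_dendriform_multiplication Op pcomp pi_prec pi_succ"
  unfolding is_dendriform_multiplication_def
  using pi_prec_in pi_succ_in dendriform_left dendriform_middle dendriform_right by blast

end

theorem proposition4p4:
  fixes smul :: "'k::{comm_ring_1, semiring_char_0} \<Rightarrow> 'o::ab_group_add \<Rightarrow> 'o"
    and Op :: "nat \<Rightarrow> 'o set"
    and pcomp :: "nat \<Rightarrow> nat \<Rightarrow> nat \<Rightarrow> 'o \<Rightarrow> 'o \<Rightarrow> 'o"
    and unit \<pi> R :: 'o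
  assumes "ns_operad smul Op pcomp unit"
    and "is_multiplication Op pcomp \<pi>"
    and "is_rota_baxter Op pcomp \<pi> R"
  shows "is_dendriform_multiplication Op pcomp (pcomp 2 1 2 \<pi> R) (pcomp 2 1 1 \<pi> R)"
proof -
  interpret pseudo_operad Op pcomp
    using assms(1) by (rule ns_operad_imp_pseudo_operad)
  interpret rota_baxter_multiplication Op pcomp \<pi> R
    using assms(2,3) by unfold_locales
  show ?thesis by (rule dendriform_multiplication)
qed

end
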